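(* Let $U$ be a binary operator on $\mathbb{C}^2\otimes\mathbb{C}^2$ written in $2\times2$ blocks as $U=\left[\begin{array}{c|c}U_{11}&U_{12}\\ \hline U_{21}&U_{22}\end{array}\right]$ (each $U_{ij}$ a $2\times2$ matrix, $U=\sum_{a,b\in\{0,1\}}\ket a\bra b\otimes U_{a+1,b+1}$). Let $k\ge2$, $m,n\ge1$ with $m+n\le k$, and let $\rho$ be a density operator on $\otimes^k\mathbb{C}^2$. Then $$\mathrm{Tr}\!\left[\big(I^{(m-1)}\otimes P_1\otimes I^{(n-1)}\otimes P_1\otimes I^{(k-m-n)}\big)\,U_{(k;m,m+n)}\,\rho\,U_{(k;m,m+n)}^{\dagger}\right]=\mathrm{Tr}\!\left[\big(I^{(m-1)}\otimes\Lambda_U^{(n+1)}\otimes I^{(k-m-n)}\big)\rho\right],$$ where $$\Lambda_U^{(n+1)}=\left[\begin{array}{c|c}I^{(n-1)}\otimes(U_{21}^{\dagger}P_1U_{21})&I^{(n-1)}\otimes(U_{21}^{\dagger}P_1U_{22})\\ \hline I^{(n-1)}\otimes(U_{22}^{\dagger}P_1U_{21})&I^{(n-1)}\otimes(U_{22}^{\dagger}P_1U_{22})\end{array}\right].$$ (The left-hand side is the multi-target probability $\texttt{P}[U_{(k;m,m+n)},\rho]$ when the target positions of $U_{(k;m,m+n)}$ are exactly $m$ and $m+n$.)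
   Context: Qubits are vectors in $\mathbb{C}^2$ with computational basis $\ket0,\ket1$; tensor products are Kronecker products. $I^{(j)}$ denotes the identity on $\otimes^j\mathbb{C}^2$, $I^{(0)}=1$. $P_1=\ket1\bra1$. For a binary gate $U$ and $1\le m<m+n\le k$, $U_{(k;m,m+n)}$ denotes the operator on $\otimes^k\mathbb{C}^2$ that applies $U$ to the $m$-th and $(m+n)$-th qubits (the $m$-th as first factor of $U$, the $(m+n)$-th as second) and acts as the identity on the other qubits. In the paper's multi-target quantum computational logic, the probability $\texttt{P}[V,\rho]$ of a gate $V$ on input $\rho$ is $\mathrm{Tr}[(\mathcal P_1\otimes\cdots\otimes\mathcal P_k)V\rho V^\dagger]$ with $\mathcal P_i=P_1$ at target positions (those qubits affected by $V$) and $\mathcal P_i=I$ at the other positions. *)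

theory Defs
  imports Complex_Main "Jordan_Normal_Form.Matrix"
begin

text \<open>Operators on
  k qubits are 2^k x 2^k matrices; the computational basis index x encodes the bits
  of the qubits with qubit 1 as the most significant bit.\<close>

definition kron :: "complex mat \<Rightarrow> complex mat \<Rightarrow> complex mat" where
  "kron A B = mat (dim_row A * dim_row B) (dim_col A * dim_col B)
     (\<lambda>(i,j). A $$ (i div dim_row B, j div dim_col B) * B $$ (i mod dim_row B, j mod dim_col B))"

definition dag :: "complex mat \<Rightarrow> complex mat" where
  "dag A = mat (dim_col A) (dim_row A) (\<lambda>(i,j). cnj (A $$ (j,i)))"

definition tr :: "complex mat \<Rightarrow> complex" where
  "tr A = (\<Sum>i<dim_row A. A $$ (i,i))"

definition Id :: "nat \<Rightarrow> complex mat" where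
  "Id j = 1\<^sub>m (2 ^ j)"

definition P1 :: "complex mat" where
  "P1 = mat 2 2 (\<lambda>(i,j). if i = 1 \<and> j = 1 then 1 else 0)"

text \<open>Block U_{a+1,b+1} (a,b in {0,1}) of a 4x4 matrix U = sum |a><b| (x) U_{a+1,b+1}.\<close>
definition blk :: "complex mat \<Rightarrow> nat \<Rightarrow> nat \<Rightarrow> complex mat" where
  "blk U a b = mat 2 2 (\<lambda>(i,j). U $$ (2 * a + i, 2 * b + j))"

text \<open>The value of the q-th qubit (1-based) in basis index x of a k-qubit register.\<close>
definition qbit :: "nat \<Rightarrow> nat \<Rightarrow> nat \<Rightarrow> nat" where
  "qbit k q x = (x div 2 ^ (k - q)) mod 2"

definition gate2 :: "complex mat \<Rightarrow> nat \<Rightarrow> nat \<Rightarrow> nat \<Rightarrow> complex mat" where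
  "gate2 U k p q = mat (2 ^ k) (2 ^ k) (\<lambda>(y,x).
     if (\<forall>i\<in>{1..k}. i \<noteq> p \<and> i \<noteq> q \<longrightarrow> qbit k i y = qbit k i x)
     then U $$ (2 * qbit k p y + qbit k q y, 2 * qbit k p x + qbit k q x) else 0)"

definition Lambda :: "complex mat \<Rightarrow> nat \<Rightarrow> complex mat" where
  "Lambda U n = four_block_mat
     (kron (Id (n - 1)) (dag (blk U 1 0) * P1 * blk U 1 0))
     (kron (Id (n - 1)) (dag (blk U 1 0) * P1 * blk U 1 1))
     (kron (Id (n - 1)) (dag (blk U 1 1) * P1 * blk U 1 0))
     (kron (Id (n - 1)) (dag (blk U 1 1) * P1 * blk U 1 1))"

definition density :: "nat \<Rightarrow> complex mat \<Rightarrow> bool" where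
  "density k \<rho> \<longleftrightarrow> \<rho> \<in> carrier_mat (2 ^ k) (2 ^ k) \<and> dag \<rho> = \<rho> \<and>
     (\<forall>v \<in> carrier_vec (2 ^ k). 0 \<le> Re (scalar_prod (map_vec cnj v) (\<rho> *\<^sub>v v))) \<and> tr \<rho> = 1"

end

theory Submission
  imports Defs
begin

(* With G = U_(k;m,m+n) and P the projector onto "both target qubits are 1", cyclicity of the
   trace turns the left-hand side into Tr[(G^dag P G) rho], so it suffices to show
   G^dag P G = I^(m-1) (x) Lambda_U^(n+1) (x) I^(k-m-n), entrywise in the computational basis.
   The entry of G between two basis states is U evaluated at their target-bit pairs if they agree
   off the targets, and 0 otherwise. In (G^dag P G)(y,x) = sum_z cnj G(z,y) P(z,z) G(z,x) only the
   single z that agrees with y off the targets and has both target bits 1 survives, leaving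
   cnj U(|11>, y_m y_(m+n)) U(|11>, x_m x_(m+n)) for y, x agreeing off the targets; unwinding the
   Kronecker and block structure of the right-hand side gives the same entries. *)

lemma tr_mult_comm:
  assumes "A \<in> carrier_mat n r" "B \<in> carrier_mat r n"
  shows "tr (A * B) = tr (B * A)"
proof -
  have "tr (A * B) = (\<Sum>i<n. \<Sum>j<r. A $$ (i,j) * B $$ (j,i))"
    using assms unfolding tr_def by (auto simp: scalar_prod_def lessThan_atLeast0 intro!: sum.cong)
  also have "\<dots> = (\<Sum>j<r. \<Sum>i<n. B $$ (j,i) * A $$ (i,j))"
    by (subst sum.swap) (simp add: mult.commute)
  also have "\<dots> = tr (B * A)"
    using assms unfolding tr_def by (auto simp: scalar_prod_def lessThan_atLeast0 intro!: sum.cong)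
  finally show ?thesis .
qed

lemma dag_carrier_mat: "A \<in> carrier_mat r c \<Longrightarrow> dag A \<in> carrier_mat c r"
  unfolding dag_def by auto

lemma index_dag: "A \<in> carrier_mat r c \<Longrightarrow> i < c \<Longrightarrow> j < r \<Longrightarrow> dag A $$ (i,j) = cnj (A $$ (j,i))"
  unfolding dag_def by auto

lemma tr_conjugate_cycle:
  assumes "A \<in> carrier_mat n n" "G \<in> carrier_mat n n" "\<rho> \<in> carrier_mat n n"
  shows "tr (A * G * \<rho> * dag G) = tr (dag G * A * G * \<rho>)"
proof -
  have dG: "dag G \<in> carrier_mat n n" using assms(2) by (rule dag_carrier_mat)
  have "tr (A * G * \<rho> * dag G) = tr (dag G * (A * G * \<rho>))"
    by (rule tr_mult_comm) (use assms dG in auto)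
  also have "\<dots> = tr (dag G * A * G * \<rho>)"
    using assms dG by (simp add: assoc_mult_mat[of _ n n _ n _ n])
  finally show ?thesis .
qed

lemma index_mult_mat_sum:
  assumes "A \<in> carrier_mat n r" "B \<in> carrier_mat r c" "i < n" "j < c"
  shows "(A * B) $$ (i,j) = (\<Sum>l<r. A $$ (i,l) * B $$ (l,j))"
  using assms by (auto simp: scalar_prod_def lessThan_atLeast0 intro!: sum.cong)

lemma kron_carrier_mat:
  "A \<in> carrier_mat ra ca \<Longrightarrow> B \<in> carrier_mat rb cb \<Longrightarrow> kron A B \<in> carrier_mat (ra * rb) (ca * cb)"
  unfolding kron_def by auto

lemma index_kron:
  assumes "A \<in> carrier_mat ra ca" "B \<in> carrier_mat rb cb" "i < ra * rb" "j < ca * cb"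
  shows "kron A B $$ (i,j) = A $$ (i div rb, j div cb) * B $$ (i mod rb, j mod cb)"
  using assms unfolding kron_def by auto

lemma Id_carrier_mat: "Id e \<in> carrier_mat (2^e) (2^e)"
  unfolding Id_def by simp

lemma P1_carrier_mat: "P1 \<in> carrier_mat 2 2"
  unfolding P1_def by simp

lemma index_Id: "a < 2^e \<Longrightarrow> b < 2^e \<Longrightarrow> Id e $$ (a,b) = of_bool (a = b)"
  unfolding Id_def by simp

lemma index_kron_Id_left:
  assumes "A \<in> carrier_mat r r" "i < 2^e * r" "j < 2^e * r"
  shows "kron (Id e) A $$ (i,j) = (if i div r = j div r then A $$ (i mod r, j mod r) else 0)"
  using index_kron[OF Id_carrier_mat assms] assms by (simp add: index_Id less_mult_imp_div_less)

lemma index_kron_Id_right: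
  assumes "A \<in> carrier_mat r r" "i < r * 2^e" "j < r * 2^e"
  shows "kron A (Id e) $$ (i,j) = (if i mod 2^e = j mod 2^e then A $$ (i div 2^e, j div 2^e) else 0)"
  using index_kron[OF assms(1) Id_carrier_mat assms(2,3)] by (simp add: index_Id)

lemma index_kron_P1_right:
  assumes "A \<in> carrier_mat r r" "i < r * 2" "j < r * 2"
  shows "kron A P1 $$ (i,j) = (if odd i \<and> odd j then A $$ (i div 2, j div 2) else 0)"
  using index_kron[OF assms(1) P1_carrier_mat assms(2,3)] by (simp add: P1_def odd_iff_mod_2_eq_one)

lemma index_four_block_mat_halves:
  assumes "\<And>a b. F a b \<in> carrier_mat S S" "p < S + S" "q < S + S"
  shows "four_block_mat (F 0 0) (F 0 1) (F 1 0) (F 1 1) $$ (p,q) = F (p div S) (q div S) $$ (p mod S, q mod S)"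
proof -
  have half: "x div S = 1 \<and> x mod S = x - S" if "S \<le> x" "x < S + S" for x
    using that by (simp add: le_div_geq le_mod_geq)
  show ?thesis
    using assms(2,3) assms(1)[THEN carrier_matD(1)] assms(1)[THEN carrier_matD(2)]
    by (cases "p < S"; cases "q < S") (simp_all add: half)
qed

section \<open>Binary digits of basis indices\<close>

lemma mod_pow2_eq_iff_bits:
  "(a::nat) mod 2^w = b mod 2^w \<longleftrightarrow> (\<forall>q<w. bit a q = bit b q)"
  by (auto simp: bit_eq_iff bit_take_bit_iff simp flip: take_bit_eq_mod)

lemma div_pow2_mod_pow2_eq_iff_bits:
  "(a::nat) div 2^p mod 2^w = b div 2^p mod 2^w \<longleftrightarrow> (\<forall>q<w. bit a (p+q) = bit b (p+q))"
  by (auto simp: bit_eq_iff bit_take_bit_iff bit_drop_bit_eq simp flip: take_bit_eq_mod drop_bit_eq_div)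

lemma div_pow2_eq_iff_bits:
  "(a::nat) div 2^p = b div 2^p \<longleftrightarrow> (\<forall>q. bit a (p+q) = bit b (p+q))"
  by (simp add: bit_eq_iff bit_drop_bit_eq flip: drop_bit_eq_div)

lemma not_bit_above_exp: "(y::nat) < 2^k \<Longrightarrow> k \<le> q \<Longrightarrow> \<not> bit y q"
  by (metis bit_take_bit_iff not_le take_bit_nat_eq_self)

lemma div_pow2_div_2: "(a::nat) div 2^p div 2 = a div 2^(p + 1)"
  using div_exp_eq[of a p 1] by simp

lemma div_pow2_eq_of_bool_bit: "(p::nat) < 2^(n + 1) \<Longrightarrow> p div 2^n = of_bool (bit p n)"
proof -
  assume "p < 2^(n + 1)"
  then have "p div 2^n < 2" by (simp add: less_mult_imp_div_less)
  then have "p div 2^n = p div 2^n mod 2" by simp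
  then show ?thesis by (simp add: bit_iff_odd of_bool_odd_eq_mod_2)
qed

lemma mod_2_eq_of_bool_bit_0: "(p::nat) mod 2 = of_bool (bit p 0)"
  by (simp add: bit_0 of_bool_odd_eq_mod_2)

lemma bit_mod_pow2: "bit ((a::nat) mod 2^w) q \<longleftrightarrow> q < w \<and> bit a q"
  by (simp add: bit_take_bit_iff flip: take_bit_eq_mod)

lemma bit_div_pow2_mod_pow2: "bit ((a::nat) div 2^p mod 2^w) q \<longleftrightarrow> q < w \<and> bit a (p + q)"
  by (simp add: bit_take_bit_iff bit_drop_bit_eq ac_simps flip: drop_bit_eq_div take_bit_eq_mod)

lemma all_nat_split_two_points:
  "(\<forall>q::nat. P q) \<longleftrightarrow>
     (\<forall>q<s. P q) \<and> P s \<and> (\<forall>q<d. P (s + 1 + q)) \<and> P (s + 1 + d) \<and> (\<forall>q. P (s + 2 + d + q))"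
  (is "_ \<longleftrightarrow> ?R")
proof (intro iffI allI)
  fix q
  assume ?R
  then have below: "\<forall>q<s. P q" and at_s: "P s" and between: "\<forall>q<d. P (s + 1 + q)"
    and at_t: "P (s + 1 + d)" and above: "\<forall>q. P (s + 2 + d + q)"
    by blast+
  consider "q < s" | "q = s" | "s < q" "q < s + 1 + d" | "q = s + 1 + d" | "s + 1 + d < q"
    by linarith
  then show "P q"
  proof cases
    case 3
    then have q: "s + 1 + (q - s - 1) = q" and "q - s - 1 < d" by auto
    then show ?thesis using between[rule_format, of "q - s - 1"] by (simp only: q)
  next
    case 5
    then have q: "s + 2 + d + (q - s - 2 - d) = q" by auto
    show ?thesis using above[rule_format, of "q - s - 2 - d"] by (simp only: q)
  qed (use below at_s at_t in auto)
qed blast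

definition bits_agree_except :: "nat \<Rightarrow> nat \<Rightarrow> nat \<Rightarrow> nat \<Rightarrow> bool" where
  "bits_agree_except s t a b \<longleftrightarrow> (\<forall>q. q \<noteq> s \<and> q \<noteq> t \<longrightarrow> bit a q = bit b q)"

lemma bits_agree_except_iff_segments:
  "bits_agree_except s (s + 1 + d) a b \<longleftrightarrow>
     (\<forall>q<s. bit a q = bit b q) \<and> (\<forall>q<d. bit a (s + 1 + q) = bit b (s + 1 + q))
     \<and> (\<forall>q. bit a (s + 2 + d + q) = bit b (s + 2 + d + q))"
proof -
  define Q where "Q q \<longleftrightarrow> q \<noteq> s \<and> q \<noteq> s + 1 + d \<longrightarrow> bit a q = bit b q" for q
  have "(\<forall>q. Q q) \<longleftrightarrow>
     (\<forall>q<s. Q q) \<and> Q s \<and> (\<forall>q<d. Q (s + 1 + q)) \<and> Q (s + 1 + d) \<and> (\<forall>q. Q (s + 2 + d + q))"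
    by (rule all_nat_split_two_points)
  then show ?thesis unfolding bits_agree_except_def Q_def by simp
qed

lemma eq_iff_bits_agree_except:
  "(a::nat) = b \<longleftrightarrow> bits_agree_except s t a b \<and> (bit a s \<longleftrightarrow> bit b s) \<and> (bit a t \<longleftrightarrow> bit b t)"
proof
  assume "bits_agree_except s t a b \<and> (bit a s \<longleftrightarrow> bit b s) \<and> (bit a t \<longleftrightarrow> bit b t)"
  then show "a = b"
    unfolding bits_agree_except_def by (intro bit_eqI) metis
qed (simp add: bits_agree_except_def)

definition pair_index :: "nat \<Rightarrow> nat \<Rightarrow> nat \<Rightarrow> nat" where
  "pair_index t s z = 2 * of_bool (bit z t) + of_bool (bit z s)"

section \<open>The operators in the computational basis\<close>

lemma two_qubit_projector_carrier_mat:
  "kron (kron (kron (kron (Id M) P1) (Id N)) P1) (Id E) \<in> carrier_mat (2^M * 2 * 2^N * 2 * 2^E) (2^M * 2 * 2^N * 2 * 2^E)"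
  by (intro kron_carrier_mat Id_carrier_mat P1_carrier_mat)

lemma index_two_qubit_projector:
  fixes M N E :: nat
  assumes "i < 2^M * 2 * 2^N * 2 * 2^E" "j < 2^M * 2 * 2^N * 2 * 2^E"
  shows "kron (kron (kron (kron (Id M) P1) (Id N)) P1) (Id E) $$ (i,j) =
    of_bool (i = j \<and> bit i E \<and> bit i (E + 1 + N))"
proof -
  have c1: "kron (Id M) P1 \<in> carrier_mat (2^M * 2) (2^M * 2)"
    by (intro kron_carrier_mat Id_carrier_mat P1_carrier_mat)
  have c2: "kron (kron (Id M) P1) (Id N) \<in> carrier_mat (2^M * 2 * 2^N) (2^M * 2 * 2^N)"
    by (intro kron_carrier_mat c1 Id_carrier_mat)
  have c3: "kron (kron (kron (Id M) P1) (Id N)) P1 \<in> carrier_mat (2^M * 2 * 2^N * 2) (2^M * 2 * 2^N * 2)"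
    by (intro kron_carrier_mat c2 P1_carrier_mat)
  have "kron (kron (kron (kron (Id M) P1) (Id N)) P1) (Id E) $$ (i,j) =
    of_bool (i mod 2^E = j mod 2^E \<and> odd (i div 2^E) \<and> odd (j div 2^E)
      \<and> i div 2^E div 2 mod 2^N = j div 2^E div 2 mod 2^N
      \<and> odd (i div 2^E div 2 div 2^N) \<and> odd (j div 2^E div 2 div 2^N)
      \<and> i div 2^E div 2 div 2^N div 2 = j div 2^E div 2 div 2^N div 2)"
    using assms
    by (simp add: index_kron_Id_right[OF c3] index_kron_P1_right[OF c2] index_kron_Id_right[OF c1]
        index_kron_P1_right[OF Id_carrier_mat] index_Id less_mult_imp_div_less)
  also have "\<dots> = of_bool (i = j \<and> bit i E \<and> bit i (E + 1 + N))"
    unfolding div_pow2_div_2 div_exp_eq div_pow2_mod_pow2_eq_iff_bits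
    unfolding eq_iff_bits_agree_except[of i j E "E + 1 + N"] bits_agree_except_iff_segments
      mod_pow2_eq_iff_bits div_pow2_eq_iff_bits bit_iff_odd[symmetric]
    by (auto simp: ac_simps)
  finally show ?thesis .
qed

lemma Lambda_block_carrier_mat: "dag (blk U 1 a) * P1 * blk U 1 b \<in> carrier_mat 2 2"
  unfolding dag_def blk_def P1_def carrier_mat_def by simp

lemma index_Lambda_block:
  assumes "i < 2" "j < 2"
  shows "(dag (blk U 1 a) * P1 * blk U 1 b) $$ (i,j) = cnj (U $$ (3, 2 * a + i)) * U $$ (3, 2 * b + j)"
  using assms
  by (simp add: dag_def blk_def P1_def scalar_prod_def sum.atLeast0_lessThan_Suc eval_nat_numeral)

lemma Lambda_eq_four_block:
  "Lambda U (Suc N) = four_block_mat (F 0 0) (F 0 1) (F 1 0) (F 1 1)"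
  if "F = (\<lambda>a b. kron (Id N) (dag (blk U 1 a) * P1 * blk U 1 b))"
  unfolding Lambda_def that by simp

lemma index_Lambda:
  assumes "p < 2^(N + 2)" "q < 2^(N + 2)"
  shows "Lambda U (Suc N) $$ (p,q) =
    (if \<forall>r<N. bit p (Suc r) = bit q (Suc r)
     then cnj (U $$ (3, pair_index (N + 1) 0 p)) * U $$ (3, pair_index (N + 1) 0 q) else 0)"
proof -
  define F where "F = (\<lambda>a b. kron (Id N) (dag (blk U 1 a) * P1 * blk U 1 b))"
  define S :: nat where "S = 2^(N + 1)"
  have F: "F a b \<in> carrier_mat S S" for a b
    unfolding F_def S_def
    using kron_carrier_mat[OF Id_carrier_mat[of N] Lambda_block_carrier_mat[of U a b]] by (simp add: mult.commute)
  have pq: "p < S + S" "q < S + S" using assms by (simp_all add: S_def)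
  have "Lambda U (Suc N) $$ (p,q) = F (p div S) (q div S) $$ (p mod S, q mod S)"
    unfolding Lambda_eq_four_block[OF F_def] by (rule index_four_block_mat_halves[OF F pq])
  also have "\<dots> = (if p mod S div 2 = q mod S div 2
      then cnj (U $$ (3, 2 * (p div S) + p mod S mod 2)) * U $$ (3, 2 * (q div S) + q mod S mod 2) else 0)"
  proof -
    have "F a b $$ (i,j) = (if i div 2 = j div 2
        then cnj (U $$ (3, 2 * a + i mod 2)) * U $$ (3, 2 * b + j mod 2) else 0)"
      if "i < S" "j < S" for a b i j
      using that index_kron_Id_left[OF Lambda_block_carrier_mat, of i N j]
        index_Lambda_block[of "i mod 2" "j mod 2" U a b]
      unfolding F_def S_def by (simp add: mult.commute)
    moreover have "S > 0" by (simp add: S_def)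
    ultimately show ?thesis by simp
  qed
  also have "\<dots> = (if \<forall>r<N. bit p (Suc r) = bit q (Suc r)
     then cnj (U $$ (3, pair_index (N + 1) 0 p)) * U $$ (3, pair_index (N + 1) 0 q) else 0)"
  proof -
    have "p mod S div 2 = q mod S div 2 \<longleftrightarrow> (\<forall>r. bit (p mod S div 2) r = bit (q mod S div 2) r)"
      using bit_eq_iff[of "p mod S div 2" "q mod S div 2"] by simp
    also have "\<dots> \<longleftrightarrow> (\<forall>r<N. bit p (Suc r) = bit q (Suc r))"
      unfolding S_def bit_Suc[symmetric] bit_mod_pow2 by auto
    moreover have "2 * (z div S) + z mod S mod 2 = pair_index (N + 1) 0 z" if "z < 2^(N + 2)" for z
      using that div_pow2_eq_of_bool_bit[of z "N + 1"]
      unfolding pair_index_def mod_2_eq_of_bool_bit_0 S_def bit_mod_pow2 by simp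
    ultimately show ?thesis using assms by auto
  qed
  finally show ?thesis .
qed

lemma Lambda_carrier_mat: "Lambda U (Suc N) \<in> carrier_mat (2^(N + 2)) (2^(N + 2))"
proof -
  have c: "kron (Id N) (dag (blk U 1 a) * P1 * blk U 1 b) \<in> carrier_mat (2^(N + 1)) (2^(N + 1))" for a b
    using kron_carrier_mat[OF Id_carrier_mat[of N] Lambda_block_carrier_mat[of U a b]] by (simp add: mult.commute)
  have "Lambda U (Suc N) \<in> carrier_mat (2^(N + 1) + 2^(N + 1)) (2^(N + 1) + 2^(N + 1))"
    unfolding Lambda_eq_four_block[OF refl] by (rule four_block_carrier_mat[OF c c])
  then show ?thesis by simp
qed

lemma index_embedded_Lambda:
  fixes M N E :: nat
  assumes "y < 2^M * 2^(N + 2) * 2^E" "x < 2^M * 2^(N + 2) * 2^E"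
  shows "kron (kron (Id M) (Lambda U (Suc N))) (Id E) $$ (y,x) =
    (if bits_agree_except E (E + 1 + N) y x
     then cnj (U $$ (3, pair_index (E + 1 + N) E y)) * U $$ (3, pair_index (E + 1 + N) E x) else 0)"
proof -
  have c: "kron (Id M) (Lambda U (Suc N)) \<in> carrier_mat (2^M * 2^(N + 2)) (2^M * 2^(N + 2))"
    by (intro kron_carrier_mat Id_carrier_mat Lambda_carrier_mat)
  have "kron (kron (Id M) (Lambda U (Suc N))) (Id E) $$ (y,x) =
    (if y mod 2^E = x mod 2^E \<and> y div 2^E div 2^(N + 2) = x div 2^E div 2^(N + 2)
     then Lambda U (Suc N) $$ (y div 2^E mod 2^(N + 2), x div 2^E mod 2^(N + 2)) else 0)"
    using assms
    by (simp add: index_kron_Id_right[OF c] index_kron_Id_left[OF Lambda_carrier_mat] less_mult_imp_div_less)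
  also have "\<dots> = (if bits_agree_except E (E + 1 + N) y x
     then cnj (U $$ (3, pair_index (E + 1 + N) E y)) * U $$ (3, pair_index (E + 1 + N) E x) else 0)"
  proof -
    have "pair_index (N + 1) 0 (z div 2^E mod 2^(N + 2)) = pair_index (E + 1 + N) E z" for z
      unfolding pair_index_def bit_div_pow2_mod_pow2 by (simp add: ac_simps)
    moreover have "(y mod 2^E = x mod 2^E \<and> y div 2^E div 2^(N + 2) = x div 2^E div 2^(N + 2)
        \<and> (\<forall>r<N. bit (y div 2^E mod 2^(N + 2)) (Suc r) = bit (x div 2^E mod 2^(N + 2)) (Suc r)))
      \<longleftrightarrow> bits_agree_except E (E + 1 + N) y x"
      unfolding div_exp_eq bits_agree_except_iff_segments mod_pow2_eq_iff_bits div_pow2_eq_iff_bits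
        bit_div_pow2_mod_pow2
      by (auto simp: ac_simps)
    ultimately show ?thesis by (auto simp: index_Lambda)
  qed
  finally show ?thesis .
qed

lemma qbit_eq_bit: "qbit k i y = of_bool (bit y (k - i))"
  unfolding qbit_def by (simp add: bit_iff_odd of_bool_odd_eq_mod_2)

lemma qbits_agree_iff_bits_agree_except:
  assumes "p \<in> {1..k}" "q \<in> {1..k}" "y < 2^k" "x < 2^k"
  shows "(\<forall>i\<in>{1..k}. i \<noteq> p \<and> i \<noteq> q \<longrightarrow> qbit k i y = qbit k i x)
    \<longleftrightarrow> bits_agree_except (k - q) (k - p) y x"
proof
  assume qbits: "\<forall>i\<in>{1..k}. i \<noteq> p \<and> i \<noteq> q \<longrightarrow> qbit k i y = qbit k i x"
  show "bits_agree_except (k - q) (k - p) y x"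
    unfolding bits_agree_except_def
  proof (intro allI impI)
    fix r assume r: "r \<noteq> k - q \<and> r \<noteq> k - p"
    show "bit y r = bit x r"
    proof (cases "r < k")
      case True
      then have "k - r \<in> {1..k}" "k - r \<noteq> p" "k - r \<noteq> q" using r assms(1,2) by auto
      then have "qbit k (k - r) y = qbit k (k - r) x" using qbits by blast
      with True show ?thesis by (simp add: qbit_eq_bit of_bool_eq_iff)
    next
      case False
      then show ?thesis using not_bit_above_exp assms(3,4) by simp
    qed
  qed
next
  assume agree: "bits_agree_except (k - q) (k - p) y x"
  show "\<forall>i\<in>{1..k}. i \<noteq> p \<and> i \<noteq> q \<longrightarrow> qbit k i y = qbit k i x"
  proof (intro ballI impI)
    fix i assume "i \<in> {1..k}" "i \<noteq> p \<and> i \<noteq> q"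
    then have "k - i \<noteq> k - q" "k - i \<noteq> k - p" using assms(1,2) by auto
    then show "qbit k i y = qbit k i x"
      using agree unfolding bits_agree_except_def qbit_eq_bit by simp
  qed
qed

lemma gate2_carrier_mat: "gate2 U k p q \<in> carrier_mat (2^k) (2^k)"
  unfolding gate2_def by simp

lemma index_gate2:
  assumes "p \<in> {1..k}" "q \<in> {1..k}" "y < 2^k" "x < 2^k"
  shows "gate2 U k p q $$ (y,x) = (if bits_agree_except (k - q) (k - p) y x
    then U $$ (pair_index (k - p) (k - q) y, pair_index (k - p) (k - q) x) else 0)"
proof -
  have "gate2 U k p q $$ (y,x) = (if \<forall>i\<in>{1..k}. i \<noteq> p \<and> i \<noteq> q \<longrightarrow> qbit k i y = qbit k i x
    then U $$ (2 * qbit k p y + qbit k q y, 2 * qbit k p x + qbit k q x) else 0)"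
    using assms(3,4) unfolding gate2_def by (simp only: index_mat(1) prod.case)
  then show ?thesis
    unfolding qbits_agree_iff_bits_agree_except[OF assms] unfolding qbit_eq_bit pair_index_def .
qed

section \<open>Conjugating the two-target projector by the gate\<close>

lemma set_two_bits_less_exp:
  assumes "(y::nat) < 2^k" "s < k" "t < k"
  shows "set_bit s (set_bit t y) < 2^k"
proof -
  have "take_bit k (set_bit s (set_bit t y)) = set_bit s (set_bit t y)"
    using assms not_bit_above_exp[OF assms(1)] not_le by (intro bit_eqI) (auto simp: bit_simps)
  then show ?thesis by (metis take_bit_nat_less_exp)
qed

lemma index_dag_mult_projector_mult:
  fixes G P U :: "complex mat"
  assumes G: "G \<in> carrier_mat (2^k) (2^k)" and P: "P \<in> carrier_mat (2^k) (2^k)"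
    and G_entry: "\<And>z w. z < 2^k \<Longrightarrow> w < 2^k \<Longrightarrow> G $$ (z,w) =
      (if bits_agree_except s t z w then U $$ (pair_index t s z, pair_index t s w) else 0)"
    and P_entry: "\<And>i j. i < 2^k \<Longrightarrow> j < 2^k \<Longrightarrow> P $$ (i,j) = of_bool (i = j \<and> bit i s \<and> bit i t)"
    and st: "s < k" "t < k" and yx: "y < 2^k" "x < 2^k"
  shows "(dag G * P * G) $$ (y,x) = (if bits_agree_except s t y x
    then cnj (U $$ (3, pair_index t s y)) * U $$ (3, pair_index t s x) else 0)"
proof -
  \<comment> \<open>the only basis state with both target bits set that G connects to y\<close>
  define z0 where "z0 = set_bit s (set_bit t y)"
  have z0_bit: "bit z0 r \<longleftrightarrow> bit y r \<or> r = s \<or> r = t" for r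
    unfolding z0_def by (auto simp: bit_simps)
  have z0: "z0 < 2^k" unfolding z0_def using yx(1) st by (rule set_two_bits_less_exp)
  have dG: "dag G \<in> carrier_mat (2^k) (2^k)" using G by (rule dag_carrier_mat)
  have dGP: "(dag G * P) $$ (y,z) = of_bool (bit z s \<and> bit z t) * cnj (G $$ (z,y))" if "z < 2^k" for z
  proof -
    have "(dag G * P) $$ (y,z) = (\<Sum>w<2^k. dag G $$ (y,w) * P $$ (w,z))"
      by (rule index_mult_mat_sum[OF dG P yx(1) that])
    also have "\<dots> = (\<Sum>w<2^k. if w = z then of_bool (bit z s \<and> bit z t) * cnj (G $$ (z,y)) else 0)"
      by (rule sum.cong) (use that yx in \<open>auto simp: P_entry index_dag[OF G]\<close>)
    finally show ?thesis using that by simp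
  qed
  have "(dag G * P * G) $$ (y,x) = (\<Sum>z<2^k. of_bool (bit z s \<and> bit z t) * cnj (G $$ (z,y)) * G $$ (z,x))"
    using index_mult_mat_sum[OF mult_carrier_mat[OF dG P] G yx] by (simp add: dGP)
  also have "\<dots> = (\<Sum>z<2^k. if z = z0 then cnj (G $$ (z0,y)) * G $$ (z0,x) else 0)"
  proof (rule sum.cong[OF refl])
    fix z :: nat assume "z \<in> {..<2^k}"
    show "of_bool (bit z s \<and> bit z t) * cnj (G $$ (z,y)) * G $$ (z,x) =
      (if z = z0 then cnj (G $$ (z0,y)) * G $$ (z0,x) else 0)"
    proof (cases "z = z0")
      case False
      have "\<not> (bit z s \<and> bit z t \<and> bits_agree_except s t z y)"
      proof
        assume "bit z s \<and> bit z t \<and> bits_agree_except s t z y"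
        then have "z = z0"
          unfolding bits_agree_except_def by (intro bit_eqI) (metis z0_bit)
        with False show False ..
      qed
      then show ?thesis using False G_entry[of z y] \<open>z \<in> {..<2^k}\<close> yx by auto
    qed (simp add: z0_bit)
  qed
  also have "\<dots> = cnj (G $$ (z0,y)) * G $$ (z0,x)"
    using z0 by simp
  also have "\<dots> = (if bits_agree_except s t y x
    then cnj (U $$ (3, pair_index t s y)) * U $$ (3, pair_index t s x) else 0)"
  proof -
    have "bits_agree_except s t z0 y" "bits_agree_except s t z0 x \<longleftrightarrow> bits_agree_except s t y x"
      unfolding bits_agree_except_def by (auto simp: z0_bit)
    moreover have "pair_index t s z0 = 3" by (simp add: pair_index_def z0_bit)
    ultimately show ?thesis using G_entry[OF z0 yx(1)] G_entry[OF z0 yx(2)] by simp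
  qed
  finally show ?thesis .
qed

lemma gate2_conj_two_qubit_projector:
  fixes M N E k :: nat and U :: "complex mat"
  assumes k: "k = M + 1 + N + 1 + E"
  defines "G \<equiv> gate2 U k (M + 1) (M + 1 + Suc N)"
  shows "dag G * kron (kron (kron (kron (Id M) P1) (Id N)) P1) (Id E) * G
    = kron (kron (Id M) (Lambda U (Suc N))) (Id E)"
    (is "dag G * ?P * G = ?K")
proof -
  have dims: "(2::nat)^k = 2^M * 2 * 2^N * 2 * 2^E" "(2::nat)^k = 2^M * 2^(N + 2) * 2^E"
    unfolding k by (simp_all add: power_add)
  have G: "G \<in> carrier_mat (2^k) (2^k)" unfolding G_def by (rule gate2_carrier_mat)
  have P: "?P \<in> carrier_mat (2^k) (2^k)" unfolding dims(1) by (rule two_qubit_projector_carrier_mat)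
  have K: "?K \<in> carrier_mat (2^k) (2^k)"
    unfolding dims(2) by (intro kron_carrier_mat Id_carrier_mat Lambda_carrier_mat)
  have positions: "k - (M + 1 + Suc N) = E" "k - (M + 1) = E + 1 + N" using k by simp_all
  have G_entry: "G $$ (z,w) = (if bits_agree_except E (E + 1 + N) z w
      then U $$ (pair_index (E + 1 + N) E z, pair_index (E + 1 + N) E w) else 0)"
    if "z < 2^k" "w < 2^k" for z w
    using index_gate2[of "M + 1" k "M + 1 + Suc N" z w U] that k unfolding G_def positions by simp
  have P_entry: "?P $$ (i,j) = of_bool (i = j \<and> bit i E \<and> bit i (E + 1 + N))"
    if "i < 2^k" "j < 2^k" for i j
    using that unfolding dims(1) by (rule index_two_qubit_projector)
  show ?thesis
  proof (rule eq_matI)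
    fix y x assume "y < dim_row ?K" "x < dim_col ?K"
    then have yx: "y < 2^k" "x < 2^k" using K by auto
    have st: "E < k" "E + 1 + N < k" using k by simp_all
    show "(dag G * ?P * G) $$ (y,x) = ?K $$ (y,x)"
      using index_dag_mult_projector_mult[OF G P G_entry P_entry st yx]
        index_embedded_Lambda[OF yx[unfolded dims(2)]] by simp
  qed (use G P K dag_carrier_mat[OF G] in auto)
qed

theorem theorem8p1:
  fixes U \<rho> :: "complex mat" and k m n :: nat
  assumes "U \<in> carrier_mat 4 4"
    and "k \<ge> 2" and "m \<ge> 1" and "n \<ge> 1" and "m + n \<le> k"
    and "density k \<rho>"
  shows "tr (kron (kron (kron (kron (Id (m - 1)) P1) (Id (n - 1))) P1) (Id (k - m - n))
             * gate2 U k m (m + n) * \<rho> * dag (gate2 U k m (m + n)))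
       = tr (kron (kron (Id (m - 1)) (Lambda U n)) (Id (k - m - n)) * \<rho>)"
proof -
  define M N E where "M = m - 1" and "N = n - 1" and "E = k - m - n"
  have m: "m = M + 1" and n: "n = Suc N" and k: "k = M + 1 + N + 1 + E"
    using assms(3-5) unfolding M_def N_def E_def by simp_all
  define G where "G = gate2 U k (M + 1) (M + 1 + Suc N)"
  define P where "P = kron (kron (kron (kron (Id M) P1) (Id N)) P1) (Id E)"
  have dim: "(2::nat)^k = 2^M * 2 * 2^N * 2 * 2^E" unfolding k by (simp add: power_add)
  have "tr (P * G * \<rho> * dag G) = tr (dag G * P * G * \<rho>)"
  proof (rule tr_conjugate_cycle)
    show "P \<in> carrier_mat (2^k) (2^k)" unfolding P_def dim by (rule two_qubit_projector_carrier_mat)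
    show "G \<in> carrier_mat (2^k) (2^k)" unfolding G_def by (rule gate2_carrier_mat)
    show "\<rho> \<in> carrier_mat (2^k) (2^k)" using assms(6) unfolding density_def by simp
  qed
  also have "\<dots> = tr (kron (kron (Id M) (Lambda U (Suc N))) (Id E) * \<rho>)"
    unfolding P_def G_def gate2_conj_two_qubit_projector[OF k] ..
  finally show ?thesis
    unfolding P_def G_def using m n k by simp
qed

end
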